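(* In the lower-bound instance for CTS-G described in the context, for any round $t>T/2$ such that $K_{t-1}\le0.5\,m(t-H)$, we have $|B_t|\ge2m$, where $B_t:=\{a\in[N]\setminus G: n_{a,t}\le L\}$ and $L:=\frac{16m\ln(T/2)}{25\Delta^2}-1$.
   Context: Top-$m$ instance: $N$ base arms with $N\ge400m$, $m\ge1$; every round any $m$ of the $N$ arms may be played. A set $G\subset[N]$ with $|G|=m$ is fixed; rewards are deterministic: $r_a=\Delta$ for $a\in G$ and $r_a=0$ otherwise, with $\Delta:=\frac45\sqrt{\frac{N\ln T}{T}}$, and $T$ is sufficiently large (in particular $T>\frac{16}{25}N\ln T$). The agent runs CTS-G with $\gamma=1$: in round $t$ draw independently $w_{a,t}\sim\mathcal{N}\big(\hat r_{a,n_{a,t}},\frac{m\ln t}{n_{a,t}+1}\big)$ and play the $m$ arms with largest $w_{a,t}$; $n_{a,t}$ is the number of plays of $a$ in rounds $1,\dots,t-1$, $\hat r_{a,n_{a,t}}$ its empirical mean ($0$ if unplayed). $k_s$ is the number of arms of $[N]\setminus G$ played in round $s$, $K_{t-1}:=\sum_{s=1}^{t-1}k_s$, and $H:=\lceil64m\ln T/\Delta^2\rceil$. *)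

theory Defs
  imports Complex_Main
begin

definition valid_history :: "nat \<Rightarrow> nat \<Rightarrow> (nat \<Rightarrow> nat set) \<Rightarrow> nat \<Rightarrow> bool" where
  "valid_history N m play t \<longleftrightarrow> (\<forall>s\<in>{1..<t}. play s \<subseteq> {..<N} \<and> card (play s) = m)"

definition n_plays :: "(nat \<Rightarrow> nat set) \<Rightarrow> nat \<Rightarrow> nat \<Rightarrow> nat" where
  "n_plays play a t = card {s \<in> {1..<t}. a \<in> play s}"

text \<open>K_{t-1} = sum_{s=1}^{t-1} k_s, k_s = number of arms outside G played in round s.\<close>
definition K_sub :: "nat set \<Rightarrow> (nat \<Rightarrow> nat set) \<Rightarrow> nat \<Rightarrow> nat" where
  "K_sub G play t = (\<Sum>s\<in>{1..<t}. card (play s - G))"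

definition gap :: "nat \<Rightarrow> nat \<Rightarrow> real" where
  "gap N T = 4/5 * sqrt (real N * ln (real T) / real T)"

definition H_len :: "nat \<Rightarrow> nat \<Rightarrow> nat \<Rightarrow> int" where
  "H_len N m T = \<lceil>64 * real m * ln (real T) / (gap N T)\<^sup>2\<rceil>"

definition L_thr :: "nat \<Rightarrow> nat \<Rightarrow> nat \<Rightarrow> real" where
  "L_thr N m T = 16 * real m * ln (real T / 2) / (25 * (gap N T)\<^sup>2) - 1"

definition B_set :: "nat \<Rightarrow> nat \<Rightarrow> nat \<Rightarrow> nat set \<Rightarrow> (nat \<Rightarrow> nat set) \<Rightarrow> nat \<Rightarrow> nat set" where
  "B_set N m T G play t = {a \<in> {..<N} - G. real (n_plays play a t) \<le> L_thr N m T}"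

end

theory Submission
  imports Defs
begin

text \<open>Every arm outside G that is not in B_t has been played more than L times, and all
  these plays are counted in K_{t-1} \<le> m T / 2. Since L = (m T / N) ln (T/2) / ln T - 1 is at
  least 3/5 m T / N once T \<ge> 1024 + 4N, at most 5N/6 arms are played that often, so the
  remaining N - m - 5N/6 \<ge> 2m arms outside G lie in B_t.\<close>

lemma sum_n_plays_le_K_sub:
  assumes "valid_history N m play t" and "A \<inter> G = {}" and "finite A"
  shows "(\<Sum>a\<in>A. n_plays play a t) \<le> K_sub G play t"
proof -
  have "(\<Sum>a\<in>A. n_plays play a t) = (\<Sum>s\<in>{1..<t}. card {a \<in> A. a \<in> play s})"
    unfolding n_plays_def using \<open>finite A\<close> by (intro sum_multicount_gen) auto
  also have "\<dots> \<le> (\<Sum>s\<in>{1..<t}. card (play s - G))"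
  proof (rule sum_mono)
    fix s assume "s \<in> {1..<t}"
    then have "finite (play s)"
      using assms(1) finite_subset unfolding valid_history_def by blast
    then show "card {a \<in> A. a \<in> play s} \<le> card (play s - G)"
      using \<open>A \<inter> G = {}\<close> by (intro card_mono) auto
  qed
  finally show ?thesis unfolding K_sub_def .
qed

lemma card_mult_le_K_sub:
  assumes "valid_history N m play t" and "A \<inter> G = {}" and "finite A"
    and "\<And>a. a \<in> A \<Longrightarrow> L < real (n_plays play a t)"
  shows "real (card A) * L \<le> real (K_sub G play t)"
proof -
  have "real (card A) * L = (\<Sum>a\<in>A. L)" by simp
  also have "\<dots> \<le> (\<Sum>a\<in>A. real (n_plays play a t))"
    using assms(4) by (intro sum_mono) (simp add: less_imp_le)
  also have "\<dots> \<le> real (K_sub G play t)"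
    using sum_n_plays_le_K_sub[OF assms(1-3)] by (simp flip: of_nat_sum)
  finally show ?thesis .
qed

lemma gap_squared:
  assumes "T \<ge> 1"
  shows "(gap N T)\<^sup>2 = 16/25 * (real N * ln (real T) / real T)"
proof -
  have "0 \<le> real N * ln (real T) / real T" using assms by simp
  from real_sqrt_pow2[OF this] show ?thesis
    unfolding gap_def power_mult_distrib by (simp add: power2_eq_square)
qed

lemma H_len_nonneg:
  assumes "T \<ge> 1"
  shows "H_len N m T \<ge> 0"
proof -
  have "0 \<le> 64 * real m * ln (real T) / (gap N T)\<^sup>2" using assms by simp
  then show ?thesis unfolding H_len_def by linarith
qed

lemma ln_half_ge:
  fixes x :: real
  assumes "x \<ge> 1024"
  shows "ln (x / 2) \<ge> 9/10 * ln x"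
proof -
  have "10 * ln (2::real) = ln (2 ^ 10)" using ln_realpow[of 2 10] by simp
  also have "\<dots> \<le> ln x" using assms by (intro ln_mono) auto
  finally show ?thesis using assms by (simp add: ln_div)
qed

lemma L_thr_ge:
  assumes "m \<ge> 1" and "N \<ge> 1" and "T \<ge> 1024" and "T \<ge> 4 * N"
  shows "L_thr N m T \<ge> 3/5 * real m * real T / real N"
proof -
  define r where "r = real m * real T / real N"
  have "4 * N \<le> m * T" using assms by (metis le_trans mult_1 mult_le_mono1)
  then have "r \<ge> 4" using assms(2) by (simp add: r_def le_divide_eq flip: of_nat_mult)
  have "ln (real T) > 0" using assms(3) by simp
  have "L_thr N m T =
      16 * real m * ln (real T / 2) / (25 * (16/25 * (real N * ln (real T) / real T))) - 1"
    using assms(3) by (simp add: L_thr_def gap_squared)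
  also have "\<dots> = r * (ln (real T / 2) / ln (real T)) - 1"
    using assms(2,3) \<open>ln (real T) > 0\<close> by (simp add: r_def field_simps)
  finally have L: "L_thr N m T = r * (ln (real T / 2) / ln (real T)) - 1" .
  have "ln (real T / 2) / ln (real T) \<ge> 9/10"
    using ln_half_ge[of "real T"] assms(3) \<open>ln (real T) > 0\<close> by (simp add: le_divide_eq)
  then have "r * (ln (real T / 2) / ln (real T)) \<ge> r * (9/10)"
    using \<open>r \<ge> 4\<close> by (intro mult_left_mono) auto
  then show ?thesis using \<open>r \<ge> 4\<close> unfolding L r_def by simp
qed

lemma card_heavily_played_le:
  assumes "m \<ge> 1" and "N \<ge> 1" and "T \<ge> 1024 + 4 * N" and "t \<le> T"
    and "valid_history N m play t"
    and K: "real (K_sub G play t) \<le> 0.5 * real m * (real t - real_of_int (H_len N m T))"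
    and "A \<inter> G = {}" and "finite A"
    and "\<And>a. a \<in> A \<Longrightarrow> L_thr N m T < real (n_plays play a t)"
  shows "6 * card A \<le> 5 * N"
proof -
  have "real (card A) * (3/5 * real m * real T / real N) \<le> real (card A) * L_thr N m T"
    using L_thr_ge[of m N T] assms(1-3) by (intro mult_left_mono) auto
  also have "\<dots> \<le> real (K_sub G play t)"
    using assms(5,7-9) by (rule card_mult_le_K_sub)
  also have "\<dots> \<le> 1/2 * real m * real T"
  proof -
    have "real m * (real t - real_of_int (H_len N m T)) \<le> real m * real T"
      using H_len_nonneg[of T N m] assms(3,4) by (intro mult_left_mono) auto
    then show ?thesis using K by linarith
  qed
  finally have "(6 * real (card A) / real N) * (real m * real T) \<le> 5 * (real m * real T)"
    using assms(2) by (simp add: field_simps)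
  moreover have "real m * real T > 0" using assms(1,3) by simp
  ultimately have "6 * real (card A) / real N \<le> 5" by (rule mult_right_le_imp_le)
  then show ?thesis
    using assms(2) by (simp add: divide_le_eq flip: of_nat_mult)
qed

theorem lemma9:
  fixes N m :: nat
  assumes "m \<ge> 1" and "N \<ge> 400 * m"
  shows "\<exists>T0::nat. \<forall>T\<ge>T0. real T > 16/25 * real N * ln (real T) \<longrightarrow>
           (\<forall>(G::nat set) (play::nat \<Rightarrow> nat set) (t::nat).
              G \<subseteq> {..<N} \<longrightarrow> card G = m \<longrightarrow> valid_history N m play t \<longrightarrow>
              real t > real T / 2 \<longrightarrow> t \<le> T \<longrightarrow>
              real (K_sub G play t) \<le> 0.5 * real m * (real t - real_of_int (H_len N m T)) \<longrightarrow>
              card (B_set N m T G play t) \<ge> 2 * m)"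
proof (intro exI allI impI)
  fix T G play t
  assume T: "1024 + 4 * N \<le> T" and "G \<subseteq> {..<N}" and "card G = m"
    and "valid_history N m play t" and "t \<le> T"
    and K: "real (K_sub G play t) \<le> 0.5 * real m * (real t - real_of_int (H_len N m T))"
  define A where "A = {..<N} - G - B_set N m T G play t"
  have "B_set N m T G play t \<subseteq> {..<N} - G" by (auto simp: B_set_def)
  moreover have "card ({..<N} - G) = N - m"
    using \<open>G \<subseteq> {..<N}\<close> \<open>card G = m\<close> by (simp add: card_Diff_subset finite_subset)
  ultimately have "card (B_set N m T G play t) + card A = N - m"
    unfolding A_def by (metis card_Diff_subset card_mono finite_Diff finite_lessThan
      finite_subset le_add_diff_inverse)
  moreover have "6 * card A \<le> 5 * N"
    using assms T \<open>t \<le> T\<close> \<open>valid_history N m play t\<close> K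
    by (intro card_heavily_played_le) (auto simp: A_def B_set_def)
  ultimately show "card (B_set N m T G play t) \<ge> 2 * m"
    using assms by linarith
qed

end
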